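(* Let $I$ be an open interval and let $a_1,a_2,a_3\in I$ be pairwise distinct. Then for all $f\in\mathscr{C}^3(I)$ and $x\in I$, \[ \begin{aligned} f(x)&=\bigg(f(a_1)+\int_{a_1}^x(f'''-f')(t)\big(\cosh(a_1-t)-1\big)dt\bigg)\frac{\cosh\big(x-\frac{a_2+a_3}{2}\big)-\cosh\big(\frac{a_2-a_3}{2}\big)}{\cosh\big(a_1-\frac{a_2+a_3}{2}\big)-\cosh\big(\frac{a_2-a_3}{2}\big)}\\ &\quad+\bigg(f(a_2)+\int_{a_2}^x(f'''-f')(t)\big(\cosh(a_2-t)-1\big)dt\bigg)\frac{\cosh\big(x-\frac{a_1+a_3}{2}\big)-\cosh\big(\frac{a_1-a_3}{2}\big)}{\cosh\big(a_2-\frac{a_1+a_3}{2}\big)-\cosh\big(\frac{a_1-a_3}{2}\big)}\\ &\quad+\bigg(f(a_3)+\int_{a_3}^x(f'''-f')(t)\big(\cosh(a_3-t)-1\big)dt\bigg)\frac{\cosh\big(x-\frac{a_1+a_2}{2}\big)-\cosh\big(\frac{a_1-a_2}{2}\big)}{\cosh\big(a_3-\frac{a_1+a_2}{2}\big)-\cosh\big(\frac{a_1-a_2}{2}\big)}. \end{aligned} \]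
   Context: $\mathscr{C}^3(I)$ denotes the space of three times continuously differentiable complex-valued functions on $I$. *)

theory Defs
  imports "HOL-Analysis.Analysis"
begin

definition oint :: "real \<Rightarrow> real \<Rightarrow> (real \<Rightarrow> complex) \<Rightarrow> complex" where
  "oint a b g = (if a \<le> b then integral {a..b} g else - integral {b..a} g)"

end

theory Submission
  imports Defs
begin

text \<open>
  For fixed \<open>a\<close>, the function
  \<open>G\<^sub>a t = f t + (cosh (a - t) - 1) f'' t + sinh (a - t) f' t\<close> satisfies \<open>G\<^sub>a a = f a\<close> and
  \<open>G\<^sub>a' t = (f''' t - f' t) (cosh (a - t) - 1)\<close>, so the \<open>i\<close>-th bracket of the formula is
  \<open>G\<^bsub>a\<^sub>i\<^esub> x\<close>. As a function of \<open>a\<close>, \<open>G\<^sub>a x\<close> lies in the span of \<open>1, e\<^sup>a, e\<^sup>-\<^sup>a\<close>, and the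
  cosh quotients are the Lagrange weights for interpolation in that three-dimensional
  space at the nodes \<open>a\<^sub>1, a\<^sub>2, a\<^sub>3\<close> (in the variable \<open>P = e\<^sup>a\<close> they are the quadratic
  Lagrange weights applied to \<open>P G\<^sub>a x\<close>). Hence the right-hand side is \<open>G\<^sub>x x = f x\<close>.
\<close>

lemma oint_fundamental_theorem:
  fixes G g :: "real \<Rightarrow> complex"
  assumes "\<And>t. min a b \<le> t \<Longrightarrow> t \<le> max a b \<Longrightarrow> (G has_vector_derivative g t) (at t)"
  shows "oint a b g = G b - G a"
proof (cases "a \<le> b")
  case True
  have "(g has_integral (G b - G a)) {a..b}"
    using True
    by (intro fundamental_theorem_of_calculus has_vector_derivative_at_within[OF assms]) auto
  then show ?thesis using True by (simp add: oint_def integral_unique)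
next
  case False
  have "(g has_integral (G a - G b)) {b..a}"
    using False
    by (intro fundamental_theorem_of_calculus has_vector_derivative_at_within[OF assms]) auto
  then show ?thesis using False by (simp add: oint_def integral_unique)
qed

definition cosh_taylor ::
    "(real \<Rightarrow> 'a::real_normed_vector) \<Rightarrow> (real \<Rightarrow> 'a) \<Rightarrow> (real \<Rightarrow> 'a) \<Rightarrow> real \<Rightarrow> real \<Rightarrow> 'a"
  where "cosh_taylor f f' f'' a t = f t + (cosh (a - t) - 1) *\<^sub>R f'' t + sinh (a - t) *\<^sub>R f' t"

lemma cosh_taylor_same [simp]: "cosh_taylor f f' f'' a a = f a"
  by (simp add: cosh_taylor_def)

lemma has_vector_derivative_cosh_taylor:
  assumes "(f has_vector_derivative f' t) (at t)" "(f' has_vector_derivative f'' t) (at t)"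
    and "(f'' has_vector_derivative f''' t) (at t)"
  shows "(cosh_taylor f f' f'' a has_vector_derivative (cosh (a - t) - 1) *\<^sub>R (f''' t - f' t)) (at t)"
proof -
  have "((\<lambda>t. cosh (a - t) - 1) has_real_derivative - sinh (a - t)) (at t)"
       "((\<lambda>t. sinh (a - t)) has_real_derivative - cosh (a - t)) (at t)"
    by (auto intro!: derivative_eq_intros)
  then have "(cosh_taylor f f' f'' a has_vector_derivative
          f' t + ((cosh (a - t) - 1) *\<^sub>R f''' t + (- sinh (a - t)) *\<^sub>R f'' t)
               + (sinh (a - t) *\<^sub>R f'' t + (- cosh (a - t)) *\<^sub>R f' t)) (at t)"
    unfolding cosh_taylor_def [abs_def]
    by (intro has_vector_derivative_add has_vector_derivative_scaleR assms)
  moreover have "f' t + ((cosh (a - t) - 1) *\<^sub>R f''' t + (- sinh (a - t)) *\<^sub>R f'' t)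
               + (sinh (a - t) *\<^sub>R f'' t + (- cosh (a - t)) *\<^sub>R f' t)
      = (cosh (a - t) - 1) *\<^sub>R (f''' t - f' t)"
    by (simp add: algebra_simps)
  ultimately show ?thesis by simp
qed

lemma oint_cosh_kernel_eq_cosh_taylor:
  fixes f f' f'' f''' :: "real \<Rightarrow> complex"
  assumes "is_interval I" "a \<in> I" "x \<in> I"
    and "\<And>t. t \<in> I \<Longrightarrow> (f has_vector_derivative f' t) (at t)"
    and "\<And>t. t \<in> I \<Longrightarrow> (f' has_vector_derivative f'' t) (at t)"
    and "\<And>t. t \<in> I \<Longrightarrow> (f'' has_vector_derivative f''' t) (at t)"
  shows "f a + oint a x (\<lambda>t. (f''' t - f' t) * complex_of_real (cosh (a - t) - 1))
           = cosh_taylor f f' f'' a x"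
proof -
  have segment: "{min a x..max a x} \<subseteq> I"
    using assms(1-3) by (metis is_interval_1 atLeastAtMost_iff max_def min_def subsetI)
  have deriv: "(cosh_taylor f f' f'' a has_vector_derivative
      (f''' t - f' t) * complex_of_real (cosh (a - t) - 1)) (at t)" if "t \<in> I" for t
    using has_vector_derivative_cosh_taylor
        [where f' = f' and f'' = f'' and f''' = f''', OF assms(4-6)[OF that]]
    by (simp add: scaleR_conv_of_real mult.commute)
  have "oint a x (\<lambda>t. (f''' t - f' t) * complex_of_real (cosh (a - t) - 1))
      = cosh_taylor f f' f'' a x - cosh_taylor f f' f'' a a"
    by (intro oint_fundamental_theorem deriv) (use segment in auto)
  then show ?thesis by simp
qed

lemma cosh_taylor_exp_form:
  "cosh_taylor f f' f'' a x =
     (f x - f'' x) + exp a *\<^sub>R ((exp (- x) / 2) *\<^sub>R (f'' x + f' x))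
                   + exp (- a) *\<^sub>R ((exp x / 2) *\<^sub>R (f'' x - f' x))"
proof -
  have "cosh (a - x) = exp a * exp (- x) / 2 + exp (- a) * exp x / 2"
       "sinh (a - x) = exp a * exp (- x) / 2 - exp (- a) * exp x / 2"
    by (simp_all add: cosh_def sinh_def exp_diff exp_minus field_simps)
  then show ?thesis
    unfolding cosh_taylor_def by (simp only:) (simp add: algebra_simps)
qed

definition cosh_lagrange :: "real \<Rightarrow> real \<Rightarrow> real \<Rightarrow> real \<Rightarrow> real" where
  "cosh_lagrange a b c x =
     (cosh (x - (b + c) / 2) - cosh ((b - c) / 2)) / (cosh (a - (b + c) / 2) - cosh ((b - c) / 2))"

lemma cosh_diff_cosh_exp:
  fixes b c x :: real
  shows "2 * exp ((b + c) / 2) * (cosh (x - (b + c) / 2) - cosh ((b - c) / 2))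
           = (exp x - exp b) * (exp x - exp c) / exp x"
proof -
  define q r s where "q = exp (b / 2)" and "r = exp (c / 2)" and "s = exp (x / 2)"
  have pos: "q > 0" "r > 0" "s > 0"
    by (simp_all add: q_def r_def s_def)
  have sq: "exp (2 * (y / 2)) = exp (y / 2) ^ 2" for y :: real
    by (simp add: exp_of_nat_mult [symmetric])
  have e: "exp ((b + c) / 2) = q * r" "exp ((b - c) / 2) = q / r"
          "exp (x - (b + c) / 2) = s ^ 2 / (q * r)"
          "exp b = q ^ 2" "exp c = r ^ 2" "exp x = s ^ 2"
    unfolding q_def r_def s_def sq [symmetric]
    by (simp_all add: add_divide_distrib diff_divide_distrib exp_add exp_diff)
  show ?thesis
    unfolding cosh_def exp_minus e using pos by (simp add: field_simps power2_eq_square)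
qed

lemma cosh_lagrange_exp:
  "cosh_lagrange a b c x
     = exp a * (exp x - exp b) * (exp x - exp c) / (exp x * (exp a - exp b) * (exp a - exp c))"
proof -
  let ?k = "2 * exp ((b + c) / 2)"
  have "cosh_lagrange a b c x
      = ?k * (cosh (x - (b + c) / 2) - cosh ((b - c) / 2))
          / (?k * (cosh (a - (b + c) / 2) - cosh ((b - c) / 2)))"
    by (simp add: cosh_lagrange_def)
  also have "\<dots> = ((exp x - exp b) * (exp x - exp c) / exp x)
                   / ((exp a - exp b) * (exp a - exp c) / exp a)"
    by (simp only: mult.assoc [symmetric] cosh_diff_cosh_exp)
  also have "\<dots> = exp a * (exp x - exp b) * (exp x - exp c)
                   / (exp x * (exp a - exp b) * (exp a - exp c))"
    by (simp add: field_simps)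
  finally show ?thesis .
qed

lemma cosh_lagrange_interpolation:
  fixes u v w :: "'a::real_vector"
  assumes "a1 \<noteq> a2" "a1 \<noteq> a3" "a2 \<noteq> a3"
  defines "g \<equiv> \<lambda>t. u + exp t *\<^sub>R v + exp (- t) *\<^sub>R w"
  shows "cosh_lagrange a1 a2 a3 x *\<^sub>R g a1 + cosh_lagrange a2 a1 a3 x *\<^sub>R g a2
           + cosh_lagrange a3 a1 a2 x *\<^sub>R g a3 = g x"
proof -
  define P Q R S where "P = exp a1" and "Q = exp a2" and "R = exp a3" and "S = exp x"
  define l1 l2 l3
    where "l1 = P * (S - Q) * (S - R) / (S * (P - Q) * (P - R))"
      and "l2 = Q * (S - P) * (S - R) / (S * (Q - P) * (Q - R))"
      and "l3 = R * (S - P) * (S - Q) / (S * (R - P) * (R - Q))"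
  have pos: "P > 0" "Q > 0" "R > 0" "S > 0"
    by (simp_all add: P_def Q_def R_def S_def)
  have dist: "P - Q \<noteq> 0" "P - R \<noteq> 0" "Q - R \<noteq> 0" "Q - P \<noteq> 0" "R - P \<noteq> 0" "R - Q \<noteq> 0"
    using assms by (simp_all add: P_def Q_def R_def)
  have sums: "l1 + l2 + l3 = 1" "l1 * P + l2 * Q + l3 * R = S" "l1 / P + l2 / Q + l3 / R = 1 / S"
    using pos dist unfolding l1_def l2_def l3_def
    by (simp_all add: divide_simps) (simp_all add: algebra_simps)
  have "l1 *\<^sub>R g a1 + l2 *\<^sub>R g a2 + l3 *\<^sub>R g a3
      = (l1 + l2 + l3) *\<^sub>R u + (l1 * P + l2 * Q + l3 * R) *\<^sub>R v
          + (l1 / P + l2 / Q + l3 / R) *\<^sub>R w"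
    by (simp add: g_def P_def Q_def R_def exp_minus divide_inverse algebra_simps)
  also have "\<dots> = g x"
    by (simp only: sums) (simp add: g_def S_def exp_minus inverse_eq_divide)
  finally show ?thesis
    by (simp add: l1_def l2_def l3_def P_def Q_def R_def S_def cosh_lagrange_exp)
qed

theorem mainTheorem11:
  fixes I :: "real set" and a1 a2 a3 x :: real
    and f f1 f2 f3 :: "real \<Rightarrow> complex"
  assumes I_open: "open I" and I_int: "is_interval I"
    and a_in: "a1 \<in> I" "a2 \<in> I" "a3 \<in> I"
    and a_dist: "a1 \<noteq> a2" "a1 \<noteq> a3" "a2 \<noteq> a3"
    and d1: "\<And>t. t \<in> I \<Longrightarrow> (f has_vector_derivative f1 t) (at t)"
    and d2: "\<And>t. t \<in> I \<Longrightarrow> (f1 has_vector_derivative f2 t) (at t)"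
    and d3: "\<And>t. t \<in> I \<Longrightarrow> (f2 has_vector_derivative f3 t) (at t)"
    and c3: "continuous_on I f3"
    and x_in: "x \<in> I"
  shows "f x =
      (f a1 + oint a1 x (\<lambda>t. (f3 t - f1 t) * complex_of_real (cosh (a1 - t) - 1)))
        * complex_of_real ((cosh (x - (a2 + a3) / 2) - cosh ((a2 - a3) / 2))
                         / (cosh (a1 - (a2 + a3) / 2) - cosh ((a2 - a3) / 2)))
    + (f a2 + oint a2 x (\<lambda>t. (f3 t - f1 t) * complex_of_real (cosh (a2 - t) - 1)))
        * complex_of_real ((cosh (x - (a1 + a3) / 2) - cosh ((a1 - a3) / 2))
                         / (cosh (a2 - (a1 + a3) / 2) - cosh ((a1 - a3) / 2)))
    + (f a3 + oint a3 x (\<lambda>t. (f3 t - f1 t) * complex_of_real (cosh (a3 - t) - 1)))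
        * complex_of_real ((cosh (x - (a1 + a2) / 2) - cosh ((a1 - a2) / 2))
                         / (cosh (a3 - (a1 + a2) / 2) - cosh ((a1 - a2) / 2)))"
proof -
  have bracket: "f a + oint a x (\<lambda>t. (f3 t - f1 t) * complex_of_real (cosh (a - t) - 1))
      = cosh_taylor f f1 f2 a x" if "a \<in> I" for a
    using oint_cosh_kernel_eq_cosh_taylor [OF I_int that x_in d1 d2 d3] .
  have "f x = cosh_taylor f f1 f2 x x"
    by simp
  also have "\<dots> = cosh_lagrange a1 a2 a3 x *\<^sub>R cosh_taylor f f1 f2 a1 x
            + cosh_lagrange a2 a1 a3 x *\<^sub>R cosh_taylor f f1 f2 a2 x
            + cosh_lagrange a3 a1 a2 x *\<^sub>R cosh_taylor f f1 f2 a3 x"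
    unfolding cosh_taylor_exp_form by (rule cosh_lagrange_interpolation [OF a_dist, symmetric])
  finally show ?thesis
    using bracket a_in by (simp add: cosh_lagrange_def scaleR_conv_of_real mult.commute)
qed

end
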